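(* Let $\mathcal{R}$ be a field and $(\mathcal{C}^{\bullet},\partial)$ a bigraded cochain complex of $\mathcal{R}$-vector spaces as in the context. Then \[ B^{k}(\mathcal{C},\partial)\cong\bigoplus_{p+q=k}\mathcal{B}^{k}_{q}\cap\mathcal{C}^{p,q},\qquad Z^{k}(\mathcal{C},\partial)\cong\bigoplus_{p+q=k}\mathcal{Z}^{k}_{q}\cap\mathcal{C}^{p,q},\qquad H^{k}(\mathcal{C},\partial)\cong\bigoplus_{p+q=k}\frac{\mathcal{Z}^{k}_{q}\cap\mathcal{C}^{p,q}}{\mathcal{B}^{k}_{q}\cap\mathcal{C}^{p,q}}. \]
   Context: Setting: $\mathcal{C}^{k}=\bigoplus_{p+q=k}\mathcal{C}^{p,q}$ with $\mathcal{C}^{p,q}=\{0\}$ if $p<0$ or $q<0$; $\partial$ is linear of degree $1$, $\partial^{2}=0$, $\partial=\partial_{2,-1}+\partial_{1,0}+\partial_{0,1}$ with $\partial_{i,j}(\mathcal{C}^{p,q})\subseteq\mathcal{C}^{p+i,q+j}$. $G^{q}\mathcal{C}:=\bigoplus_{j\geq q}\mathcal{C}^{i,j}$ and $\pi_{q}:\mathcal{C}\to G^{q}\mathcal{C}$ is the projection along the bigrading. $\mathcal{N}^{p,q}:=\ker(\partial_{0,1}|_{\mathcal{C}^{p,q}})\cap\ker(\partial_{2,-1}|_{\mathcal{C}^{p,q}})$, $\mathcal{N}_{q}:=\bigoplus_{p}\mathcal{N}^{p-q,q}$ (degree-$m$ part $\mathcal{N}^{m-q,q}$), a subcomplex with differential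 $\overline{\partial}:=\partial|_{\mathcal{N}_q}$. $\mathcal{M}^{k}:=\{\eta\in\mathcal{C}^{k}\mid(\partial\eta)_{i,j}\in B^{k+1}(\mathcal{N}_{j},\overline{\partial})\ \forall\, i+j=k+1\}$, where $(\partial\eta)_{i,j}$ is the $\mathcal{C}^{i,j}$-component; $\mathcal{Z}^{k}_{q}:=\{\pi_{q}(\eta)\mid\eta\in\mathcal{M}^{k},\ \pi_{q}(\partial\eta)=0\}$; $\mathcal{B}^{k}_{q}:=\pi_{q}(B^{k}(\mathcal{C},\partial))$. *)

theory Defs
  imports Complex_Main "HOL-Library.Function_Algebras"
begin

text \<open>A vector space structure over 'r: (carrier, addition, zero, scalar multiplication).\<close>
type_synonym ('r, 'e) vs = "'e set \<times> ('e \<Rightarrow> 'e \<Rightarrow> 'e) \<times> 'e \<times> ('r \<Rightarrow> 'e \<Rightarrow> 'e)"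

definition iso_vs :: "('r, 'a) vs \<Rightarrow> ('r, 'b) vs \<Rightarrow> bool" where
  "iso_vs V W = (case V of (A, addA, zA, scA) \<Rightarrow> case W of (B, addB, zB, scB) \<Rightarrow>
     (\<exists>f. bij_betw f A B \<and> (\<forall>x\<in>A. \<forall>y\<in>A. f (addA x y) = addB (f x) (f y))
          \<and> (\<forall>c. \<forall>x\<in>A. f (scA c x) = scB c (f x))))"

definition vs_sub :: "('r \<Rightarrow> 'e \<Rightarrow> 'e) \<Rightarrow> 'e set \<Rightarrow> ('r, 'e::ab_group_add) vs" where
  "vs_sub sc U = (U, (+), 0, sc)"

definition coset :: "'e::ab_group_add \<Rightarrow> 'e set \<Rightarrow> 'e set" where
  "coset x Y = (\<lambda>y. x + y) ` Y"

definition vs_quot :: "('r \<Rightarrow> 'e \<Rightarrow> 'e) \<Rightarrow> 'e set \<Rightarrow> 'e set \<Rightarrow> ('r, 'e::ab_group_add set) vs" where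
  "vs_quot sc X Y = ((\<lambda>x. coset x Y) ` X,
     (\<lambda>S T. {s + t | s t. s \<in> S \<and> t \<in> T}),
     Y,
     (\<lambda>c S. {sc c s + y | s y. s \<in> S \<and> y \<in> Y}))"

definition vs_dsum :: "nat set \<Rightarrow> (nat \<Rightarrow> ('r, 'e) vs) \<Rightarrow> ('r, nat \<Rightarrow> 'e) vs" where
  "vs_dsum I F = ({f. (\<forall>i\<in>I. f i \<in> fst (F i)) \<and> (\<forall>i. i \<notin> I \<longrightarrow> f i = undefined)},
     (\<lambda>f g i. if i \<in> I then fst (snd (F i)) (f i) (g i) else undefined),
     (\<lambda>i. if i \<in> I then fst (snd (snd (F i))) else undefined),
     (\<lambda>c f i. if i \<in> I then snd (snd (snd (F i))) c (f i) else undefined))"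

text \<open>The total space C = (+)_{p,q>=0} C^{p,q} is modelled as finitely supported families
  x :: nat => nat => 'v with x p q in C^{p,q}, where each C^{p,q} is a subspace of an
  ambient R-vector space 'v.  Negative bidegrees are zero (indices are nat).\<close>

definition scaleC :: "('r \<Rightarrow> 'v \<Rightarrow> 'v) \<Rightarrow> 'r \<Rightarrow> (nat \<Rightarrow> nat \<Rightarrow> 'v) \<Rightarrow> nat \<Rightarrow> nat \<Rightarrow> 'v" where
  "scaleC sc c x = (\<lambda>p q. sc c (x p q))"

definition tot :: "(nat \<Rightarrow> nat \<Rightarrow> 'v::zero set) \<Rightarrow> (nat \<Rightarrow> nat \<Rightarrow> 'v) set" where
  "tot Cs = {x. finite {(p, q). x p q \<noteq> 0} \<and> (\<forall>p q. x p q \<in> Cs p q)}"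

definition single :: "nat \<Rightarrow> nat \<Rightarrow> 'v::zero \<Rightarrow> nat \<Rightarrow> nat \<Rightarrow> 'v" where
  "single p q v = (\<lambda>p' q'. if p' = p \<and> q' = q then v else 0)"

definition Cpq :: "(nat \<Rightarrow> nat \<Rightarrow> 'v::zero set) \<Rightarrow> nat \<Rightarrow> nat \<Rightarrow> (nat \<Rightarrow> nat \<Rightarrow> 'v) set" where
  "Cpq Cs p q = {x \<in> tot Cs. \<forall>p' q'. (p', q') \<noteq> (p, q) \<longrightarrow> x p' q' = 0}"

definition Ck :: "(nat \<Rightarrow> nat \<Rightarrow> 'v::zero set) \<Rightarrow> nat \<Rightarrow> (nat \<Rightarrow> nat \<Rightarrow> 'v) set" where
  "Ck Cs k = {x \<in> tot Cs. \<forall>p q. x p q \<noteq> 0 \<longrightarrow> p + q = k}"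

text \<open>The bihomogeneous component partial_{i,j} of d: on C^{p,q} it is the C^{p+i,q+j}-component of d.\<close>
definition dij :: "((nat \<Rightarrow> nat \<Rightarrow> 'v::zero) \<Rightarrow> nat \<Rightarrow> nat \<Rightarrow> 'v) \<Rightarrow> int \<Rightarrow> int
    \<Rightarrow> (nat \<Rightarrow> nat \<Rightarrow> 'v) \<Rightarrow> nat \<Rightarrow> nat \<Rightarrow> 'v" where
  "dij d i j x = (\<lambda>p q. if i \<le> int p \<and> j \<le> int q
      then d (single (nat (int p - i)) (nat (int q - j)) (x (nat (int p - i)) (nat (int q - j)))) p q
      else 0)"

definition bigraded_complex :: "('r::field \<Rightarrow> 'v::ab_group_add \<Rightarrow> 'v) \<Rightarrow> (nat \<Rightarrow> nat \<Rightarrow> 'v set)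
    \<Rightarrow> ((nat \<Rightarrow> nat \<Rightarrow> 'v) \<Rightarrow> nat \<Rightarrow> nat \<Rightarrow> 'v) \<Rightarrow> bool" where
  "bigraded_complex sc Cs d \<longleftrightarrow>
     vector_space sc
   \<and> (\<forall>p q. 0 \<in> Cs p q \<and> (\<forall>x\<in>Cs p q. \<forall>y\<in>Cs p q. x + y \<in> Cs p q) \<and> (\<forall>c. \<forall>x\<in>Cs p q. sc c x \<in> Cs p q))
   \<and> (\<forall>x \<in> tot Cs. d x \<in> tot Cs)
   \<and> (\<forall>x \<in> tot Cs. \<forall>y \<in> tot Cs. d (x + y) = d x + d y)
   \<and> (\<forall>c. \<forall>x \<in> tot Cs. d (scaleC sc c x) = scaleC sc c (d x))
   \<and> (\<forall>k. \<forall>x \<in> Ck Cs k. d x \<in> Ck Cs (Suc k))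
   \<and> (\<forall>x \<in> tot Cs. d (d x) = 0)
   \<and> (\<forall>p q. \<forall>x \<in> Cpq Cs p q. \<forall>p' q'. d x p' q' \<noteq> 0 \<longrightarrow>
        (p' = p + 2 \<and> Suc q' = q) \<or> (p' = Suc p \<and> q' = q) \<or> (p' = p \<and> q' = Suc q))"

definition Npq :: "(nat \<Rightarrow> nat \<Rightarrow> 'v::zero set) \<Rightarrow> ((nat \<Rightarrow> nat \<Rightarrow> 'v) \<Rightarrow> nat \<Rightarrow> nat \<Rightarrow> 'v)
    \<Rightarrow> nat \<Rightarrow> nat \<Rightarrow> (nat \<Rightarrow> nat \<Rightarrow> 'v) set" where
  "Npq Cs d p q = {x \<in> Cpq Cs p q. dij d 0 1 x = 0 \<and> dij d 2 (-1) x = 0}"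

definition Nq_deg :: "(nat \<Rightarrow> nat \<Rightarrow> 'v::zero set) \<Rightarrow> ((nat \<Rightarrow> nat \<Rightarrow> 'v) \<Rightarrow> nat \<Rightarrow> nat \<Rightarrow> 'v)
    \<Rightarrow> nat \<Rightarrow> nat \<Rightarrow> (nat \<Rightarrow> nat \<Rightarrow> 'v) set" where
  "Nq_deg Cs d q m = (if q \<le> m then Npq Cs d (m - q) q else {0})"

definition BN :: "(nat \<Rightarrow> nat \<Rightarrow> 'v::zero set) \<Rightarrow> ((nat \<Rightarrow> nat \<Rightarrow> 'v) \<Rightarrow> nat \<Rightarrow> nat \<Rightarrow> 'v)
    \<Rightarrow> nat \<Rightarrow> nat \<Rightarrow> (nat \<Rightarrow> nat \<Rightarrow> 'v) set" where
  "BN Cs d q m = (if m = 0 then {0} else d ` Nq_deg Cs d q (m - 1))"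

definition Mk :: "(nat \<Rightarrow> nat \<Rightarrow> 'v::zero set) \<Rightarrow> ((nat \<Rightarrow> nat \<Rightarrow> 'v) \<Rightarrow> nat \<Rightarrow> nat \<Rightarrow> 'v)
    \<Rightarrow> nat \<Rightarrow> (nat \<Rightarrow> nat \<Rightarrow> 'v) set" where
  "Mk Cs d k = {\<eta> \<in> Ck Cs k. \<forall>i j. i + j = Suc k \<longrightarrow> single i j (d \<eta> i j) \<in> BN Cs d j (Suc k)}"

definition piq :: "nat \<Rightarrow> (nat \<Rightarrow> nat \<Rightarrow> 'v::zero) \<Rightarrow> nat \<Rightarrow> nat \<Rightarrow> 'v" where
  "piq q x = (\<lambda>p j. if q \<le> j then x p j else 0)"

definition Zkq :: "(nat \<Rightarrow> nat \<Rightarrow> 'v::zero set) \<Rightarrow> ((nat \<Rightarrow> nat \<Rightarrow> 'v) \<Rightarrow> nat \<Rightarrow> nat \<Rightarrow> 'v)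
    \<Rightarrow> nat \<Rightarrow> nat \<Rightarrow> (nat \<Rightarrow> nat \<Rightarrow> 'v) set" where
  "Zkq Cs d k q = {piq q \<eta> | \<eta>. \<eta> \<in> Mk Cs d k \<and> piq q (d \<eta>) = 0}"

text \<open>B^k(C) = d(C^{k-1}) (with C^{-1} = 0) and Z^k(C).\<close>
definition Bk :: "(nat \<Rightarrow> nat \<Rightarrow> 'v::zero set) \<Rightarrow> ((nat \<Rightarrow> nat \<Rightarrow> 'v) \<Rightarrow> nat \<Rightarrow> nat \<Rightarrow> 'v)
    \<Rightarrow> nat \<Rightarrow> (nat \<Rightarrow> nat \<Rightarrow> 'v) set" where
  "Bk Cs d k = {d x | x. x \<in> tot Cs \<and> (\<forall>p q. x p q \<noteq> 0 \<longrightarrow> Suc (p + q) = k)}"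

definition Zk :: "(nat \<Rightarrow> nat \<Rightarrow> 'v::zero set) \<Rightarrow> ((nat \<Rightarrow> nat \<Rightarrow> 'v) \<Rightarrow> nat \<Rightarrow> nat \<Rightarrow> 'v)
    \<Rightarrow> nat \<Rightarrow> (nat \<Rightarrow> nat \<Rightarrow> 'v) set" where
  "Zk Cs d k = {x \<in> Ck Cs k. d x = 0}"

definition Bkq :: "(nat \<Rightarrow> nat \<Rightarrow> 'v::zero set) \<Rightarrow> ((nat \<Rightarrow> nat \<Rightarrow> 'v) \<Rightarrow> nat \<Rightarrow> nat \<Rightarrow> 'v)
    \<Rightarrow> nat \<Rightarrow> nat \<Rightarrow> (nat \<Rightarrow> nat \<Rightarrow> 'v) set" where
  "Bkq Cs d k q = piq q ` Bk Cs d k"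

end

theory Submission
  imports Defs "HOL-Library.FuncSet"
begin

text \<open>Filter the cocycles by columns, F_p = Z^k \<inter> (elements supported in columns \<ge> p).
  On F_p the projection \<pi>_(k-p) just extracts the C^(p,k-p)-component, and its kernel is F_(p+1).
  Choosing linear splittings of these projections that send the part coming from B^k back into B^k
  decomposes Z^k as the direct sum of the graded pieces \<pi>_(k-p)(F_p), compatibly with B^k; this
  gives all three isomorphisms at once.  It remains to identify the graded pieces: an element
  \<pi>_q(\<eta>) with \<eta> in M^k and \<pi>_q(\<partial>\<eta>) = 0 becomes a genuine cocycle after
  subtracting, for every row j < q, a preimage in C^(k-j,j) of the (k+1-j,j)-component of \<partial>\<eta>,
  which exists by the definition of M^k and does not change \<pi>_q(\<eta>).\<close>

lemma vs_dsum_eq: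
  "vs_dsum I F = (Pi\<^sub>E I (\<lambda>i. fst (F i)),
     (\<lambda>f g. \<lambda>i\<in>I. fst (snd (F i)) (f i) (g i)),
     (\<lambda>i\<in>I. fst (snd (snd (F i)))),
     (\<lambda>c f. \<lambda>i\<in>I. snd (snd (snd (F i))) c (f i)))"
  by (auto simp: vs_dsum_def PiE_def Pi_def extensional_def restrict_def)

lemma vs_dsum_cong: "I = J \<Longrightarrow> (\<And>i. i \<in> J =simp=> F i = G i) \<Longrightarrow> vs_dsum I F = vs_dsum J G"
  unfolding vs_dsum_eq simp_implies_def by (auto intro!: ext restrict_ext PiE_cong)

lemma iso_vs_sub_PiE:
  assumes "bij_betw \<Phi> Z (Pi\<^sub>E I G)"
    and "\<And>x y. x \<in> Z \<Longrightarrow> y \<in> Z \<Longrightarrow> \<Phi> (x + y) = (\<lambda>i\<in>I. \<Phi> x i + \<Phi> y i)"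
    and "\<And>c x. x \<in> Z \<Longrightarrow> \<Phi> (sc c x) = (\<lambda>i\<in>I. sc c (\<Phi> x i))"
  shows "iso_vs (vs_sub sc Z) (vs_dsum I (\<lambda>i. vs_sub sc (G i)))"
  using assms unfolding iso_vs_def vs_sub_def vs_dsum_eq by auto

context vector_space
begin

lemma linear_section_compatible:
  assumes f: "Vector_Spaces.linear scale scale f"
    and X: "subspace X" and X': "subspace X'" and "X' \<subseteq> X"
  obtains g where "Vector_Spaces.linear scale scale g"
    and "\<And>w. w \<in> f ` X \<Longrightarrow> g w \<in> X \<and> f (g w) = w"
    and "\<And>w. w \<in> f ` X' \<Longrightarrow> g w \<in> X'"
proof -
  interpret P: vector_space_pair scale scale ..
  obtain U where U: "U \<subseteq> f ` X'" "independent U" "f ` X' \<subseteq> span U"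
    using maximal_independent_subset by blast
  have "U \<subseteq> f ` X" using U(1) \<open>X' \<subseteq> X\<close> by blast
  then obtain W where W: "U \<subseteq> W" "W \<subseteq> f ` X" "independent W" "f ` X \<subseteq> span W"
    using maximal_independent_subset_extend[of U "f ` X"] U(2) by blast
  text \<open>Lift the basis W of f`X, extending a basis U of f`X', to preimages taken in X' whenever possible.\<close>
  define h where "h b = (if b \<in> U then (SOME x. x \<in> X' \<and> f x = b) else (SOME x. x \<in> X \<and> f x = b))" for b
  have h_U: "h b \<in> X' \<and> f (h b) = b" if "b \<in> U" for b
  proof -
    from that U(1) obtain x where "x \<in> X'" "f x = b" by auto
    then show ?thesis unfolding h_def using that by (auto intro: someI2)
  qed
  have h_W: "h b \<in> X \<and> f (h b) = b" if "b \<in> W" for b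
  proof (cases "b \<in> U")
    case True
    then show ?thesis using h_U \<open>X' \<subseteq> X\<close> by auto
  next
    case False
    from that W(2) obtain x where "x \<in> X" "f x = b" by auto
    then show ?thesis unfolding h_def using False by (auto intro: someI2)
  qed
  define g where "g = P.construct W h"
  have g: "Vector_Spaces.linear scale scale g"
    unfolding g_def by (rule P.linear_construct[OF W(3)])
  have g_basis: "g b = h b" if "b \<in> W" for b
    unfolding g_def by (rule P.construct_basis[OF W(3) that])
  show thesis
  proof (rule that[OF g])
    fix w assume w: "w \<in> f ` X"
    have "g w \<in> span (h ` W)" unfolding g_def by (rule P.construct_in_span[OF W(3)])
    also have "span (h ` W) \<subseteq> X" using h_W X by (intro span_minimal) auto
    finally have "g w \<in> X" .
    moreover have "(f \<circ> g) w = id w"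
    proof (rule P.linear_eq_on[where B = W and f = "f \<circ> g" and g = id])
      show "Vector_Spaces.linear scale scale (f \<circ> g)" by (rule Vector_Spaces.linear_compose[OF g f])
      show "w \<in> span W" using w W(4) by auto
      show "(f \<circ> g) b = id b" if "b \<in> W" for b using g_basis[OF that] h_W[OF that] by simp
    qed (rule linear_id)
    ultimately show "g w \<in> X \<and> f (g w) = w" by simp
  next
    fix w assume "w \<in> f ` X'"
    then have "g w \<in> g ` span U" using U(3) by auto
    also have "g ` span U = span (g ` U)" by (rule P.linear_span_image[OF g, symmetric])
    also have "\<dots> \<subseteq> X'" using h_U g_basis W(1) X' by (intro span_minimal) auto
    finally show "g w \<in> X'" .
  qed
qed

lemma coset_plus_coset:
  assumes "subspace Y"
  shows "{s + t |s t. s \<in> coset x Y \<and> t \<in> coset y Y} = coset (x + y) Y"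
proof (intro set_eqI iffI)
  fix v assume "v \<in> {s + t |s t. s \<in> coset x Y \<and> t \<in> coset y Y}"
  then obtain a b where "a \<in> Y" "b \<in> Y" "v = (x + y) + (a + b)"
    by (auto simp: coset_def algebra_simps)
  then show "v \<in> coset (x + y) Y" using subspace_add[OF assms] by (auto simp: coset_def)
next
  fix v assume "v \<in> coset (x + y) Y"
  then obtain a where "a \<in> Y" "v = (x + a) + (y + 0)" by (auto simp: coset_def algebra_simps)
  moreover have "x + a \<in> coset x Y" "y + 0 \<in> coset y Y"
    using \<open>a \<in> Y\<close> subspace_0[OF assms] by (auto simp: coset_def)
  ultimately show "v \<in> {s + t |s t. s \<in> coset x Y \<and> t \<in> coset y Y}" by blast
qed

lemma scale_coset_plus:
  assumes "subspace Y"
  shows "{scale c s + t |s t. s \<in> coset x Y \<and> t \<in> Y} = coset (scale c x) Y"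
proof (intro set_eqI iffI)
  fix v assume "v \<in> {scale c s + t |s t. s \<in> coset x Y \<and> t \<in> Y}"
  then obtain a b where "a \<in> Y" "b \<in> Y" "v = scale c x + (scale c a + b)"
    by (auto simp: coset_def algebra_simps)
  then show "v \<in> coset (scale c x) Y" using assms by (auto simp: coset_def subspace_add subspace_scale)
next
  fix v assume "v \<in> coset (scale c x) Y"
  then obtain a where "a \<in> Y" "v = scale c (x + 0) + a" by (auto simp: coset_def)
  moreover have "x + 0 \<in> coset x Y" using subspace_0[OF assms] by (auto simp: coset_def)
  ultimately show "v \<in> {scale c s + t |s t. s \<in> coset x Y \<and> t \<in> Y}" by blast
qed

lemma coset_eq_iff:
  assumes "subspace Y"
  shows "coset x Y = coset y Y \<longleftrightarrow> x - y \<in> Y"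
proof
  assume "coset x Y = coset y Y"
  moreover have "x \<in> coset x Y" using subspace_0[OF assms] by (force simp: coset_def)
  ultimately obtain a where "a \<in> Y" "x = y + a" by (auto simp: coset_def)
  then show "x - y \<in> Y" by simp
next
  assume xy: "x - y \<in> Y"
  have "x + b = y + ((x - y) + b)" "y + b = x + (b - (x - y))" for b
    by (simp_all add: algebra_simps)
  then show "coset x Y = coset y Y"
    using xy subspace_add[OF assms] subspace_diff[OF assms] unfolding coset_def by blast
qed

lemma inv_into_PiE_linear:
  assumes G: "\<And>i. i \<in> I \<Longrightarrow> subspace (G i)"
    and bij: "bij_betw \<Psi> (Pi\<^sub>E I G) Z"
    and add: "\<And>w w'. w \<in> Pi\<^sub>E I G \<Longrightarrow> w' \<in> Pi\<^sub>E I G \<Longrightarrow> \<Psi> (\<lambda>i\<in>I. w i + w' i) = \<Psi> w + \<Psi> w'"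
    and scale: "\<And>c w. w \<in> Pi\<^sub>E I G \<Longrightarrow> \<Psi> (\<lambda>i\<in>I. scale c (w i)) = scale c (\<Psi> w)"
    and x: "x \<in> Z" and y: "y \<in> Z"
  shows "inv_into (Pi\<^sub>E I G) \<Psi> (x + y)
           = (\<lambda>i\<in>I. inv_into (Pi\<^sub>E I G) \<Psi> x i + inv_into (Pi\<^sub>E I G) \<Psi> y i)"
    and "inv_into (Pi\<^sub>E I G) \<Psi> (scale c x) = (\<lambda>i\<in>I. scale c (inv_into (Pi\<^sub>E I G) \<Psi> x i))"
proof -
  let ?\<Phi> = "inv_into (Pi\<^sub>E I G) \<Psi>"
  have \<Phi>: "?\<Phi> z \<in> Pi\<^sub>E I G" "\<Psi> (?\<Phi> z) = z" if "z \<in> Z" for z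
    using bij_betw_inv_into[OF bij] bij_betw_inv_into_right[OF bij] that
    by (auto simp: bij_betw_def)
  have "(\<lambda>i\<in>I. ?\<Phi> x i + ?\<Phi> y i) \<in> Pi\<^sub>E I G"
    using \<Phi>(1)[OF x] \<Phi>(1)[OF y] G by (auto simp: PiE_iff subspace_add)
  moreover have "\<Psi> (\<lambda>i\<in>I. ?\<Phi> x i + ?\<Phi> y i) = x + y"
    using add[OF \<Phi>(1)[OF x] \<Phi>(1)[OF y]] \<Phi>(2) x y by simp
  ultimately show "?\<Phi> (x + y) = (\<lambda>i\<in>I. ?\<Phi> x i + ?\<Phi> y i)"
    using bij_betw_inv_into_left[OF bij] by metis
  have "(\<lambda>i\<in>I. scale c (?\<Phi> x i)) \<in> Pi\<^sub>E I G"
    using \<Phi>(1)[OF x] G by (auto simp: PiE_iff subspace_scale)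
  moreover have "\<Psi> (\<lambda>i\<in>I. scale c (?\<Phi> x i)) = scale c x"
    using scale[OF \<Phi>(1)[OF x]] \<Phi>(2)[OF x] by simp
  ultimately show "?\<Phi> (scale c x) = (\<lambda>i\<in>I. scale c (?\<Phi> x i))"
    using bij_betw_inv_into_left[OF bij] by metis
qed

lemma iso_vs_quot_PiE:
  assumes Z: "subspace Z" and B: "subspace B" and "B \<subseteq> Z"
    and G: "\<And>i. i \<in> I \<Longrightarrow> subspace (G i)"
    and GB: "\<And>i. i \<in> I \<Longrightarrow> subspace (GB i)" "\<And>i. i \<in> I \<Longrightarrow> GB i \<subseteq> G i"
    and bij: "bij_betw \<Phi> Z (Pi\<^sub>E I G)"
    and add: "\<And>x y. x \<in> Z \<Longrightarrow> y \<in> Z \<Longrightarrow> \<Phi> (x + y) = (\<lambda>i\<in>I. \<Phi> x i + \<Phi> y i)"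
    and scale: "\<And>c x. x \<in> Z \<Longrightarrow> \<Phi> (scale c x) = (\<lambda>i\<in>I. scale c (\<Phi> x i))"
    and in_B: "\<And>z. z \<in> Z \<Longrightarrow> z \<in> B \<longleftrightarrow> (\<forall>i\<in>I. \<Phi> z i \<in> GB i)"
  shows "iso_vs (vs_quot scale Z B) (vs_dsum I (\<lambda>i. vs_quot scale (G i) (GB i)))"
proof -
  have \<Phi>_G: "\<Phi> z i \<in> G i" if "z \<in> Z" "i \<in> I" for z i
    using bij that by (auto simp: bij_betw_def PiE_iff)
  have \<Phi>_diff: "\<Phi> (x - y) i = \<Phi> x i - \<Phi> y i" if "x \<in> Z" "y \<in> Z" "i \<in> I" for x y i
    using add[OF subspace_diff[OF Z that(1,2)] that(2)] that(3) by (simp add: fun_eq_iff)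
  have \<Phi>_coset: "(\<lambda>z. \<Phi> z i) ` coset z B = coset (\<Phi> z i) (GB i)" if z: "z \<in> Z" and i: "i \<in> I" for z i
  proof (intro set_eqI iffI)
    fix v assume "v \<in> (\<lambda>z. \<Phi> z i) ` coset z B"
    then obtain b where "b \<in> B" "v = \<Phi> z i + \<Phi> b i"
      using add z i \<open>B \<subseteq> Z\<close> by (auto simp: coset_def)
    then show "v \<in> coset (\<Phi> z i) (GB i)" using in_B i \<open>B \<subseteq> Z\<close> by (auto simp: coset_def)
  next
    fix v assume "v \<in> coset (\<Phi> z i) (GB i)"
    then obtain g where g: "g \<in> GB i" "v = \<Phi> z i + g" by (auto simp: coset_def)
    define w where "w = (\<lambda>j\<in>I. if j = i then g else 0)"
    have "w \<in> Pi\<^sub>E I G" using GB(2)[OF i] g(1) G by (auto simp: w_def subspace_0)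
    then obtain b where b: "b \<in> Z" "\<Phi> b = w" using bij by (metis bij_betw_def imageE)
    have "b \<in> B" using in_B[OF b(1)] b(2) g GB(1) by (auto simp: w_def subspace_0)
    moreover have "\<Phi> (z + b) i = v" using add[OF z b(1)] b(2) g i by (simp add: w_def)
    moreover have "z + b \<in> coset z B" using \<open>b \<in> B\<close> by (simp add: coset_def)
    ultimately show "v \<in> (\<lambda>z. \<Phi> z i) ` coset z B" by (metis image_eqI)
  qed
  define M where "M S = (\<lambda>i\<in>I. (\<lambda>z. \<Phi> z i) ` S)" for S
  have M_coset: "M (coset z B) = (\<lambda>i\<in>I. coset (\<Phi> z i) (GB i))" if "z \<in> Z" for z
    unfolding M_def using \<Phi>_coset[OF that] by (intro restrict_ext) simp
  have "inj_on M ((\<lambda>z. coset z B) ` Z)"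
  proof (rule inj_onI, clarify)
    fix z z' assume z: "z \<in> Z" "z' \<in> Z" and eq: "M (coset z B) = M (coset z' B)"
    have "coset (\<Phi> z i) (GB i) = coset (\<Phi> z' i) (GB i)" if "i \<in> I" for i
      using fun_cong[OF eq, of i] M_coset z that by simp
    then have "z - z' \<in> B"
      using in_B[OF subspace_diff[OF Z z]] \<Phi>_diff[OF z] coset_eq_iff[OF GB(1)] by simp
    then show "coset z B = coset z' B" using coset_eq_iff[OF B] by simp
  qed
  moreover have "M ` (\<lambda>z. coset z B) ` Z = Pi\<^sub>E I (\<lambda>i. (\<lambda>x. coset x (GB i)) ` G i)"
  proof (intro set_eqI iffI)
    fix f assume "f \<in> M ` (\<lambda>z. coset z B) ` Z"
    then show "f \<in> Pi\<^sub>E I (\<lambda>i. (\<lambda>x. coset x (GB i)) ` G i)" using M_coset \<Phi>_G by auto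
  next
    fix f assume f: "f \<in> Pi\<^sub>E I (\<lambda>i. (\<lambda>x. coset x (GB i)) ` G i)"
    then have "\<forall>i\<in>I. \<exists>x. x \<in> G i \<and> f i = coset x (GB i)" by (auto simp: PiE_iff)
    then obtain x where x: "\<forall>i\<in>I. x i \<in> G i \<and> f i = coset (x i) (GB i)" using bchoice by metis
    then have "restrict x I \<in> \<Phi> ` Z" using bij by (simp add: bij_betw_def)
    then obtain z where z: "z \<in> Z" "\<Phi> z = restrict x I" by (metis imageE)
    have "f = M (coset z B)"
      using f x z by (auto simp: M_coset PiE_iff extensional_def fun_eq_iff)
    then show "f \<in> M ` (\<lambda>z. coset z B) ` Z" using z(1) by blast
  qed
  ultimately have "bij_betw M ((\<lambda>z. coset z B) ` Z) (Pi\<^sub>E I (\<lambda>i. (\<lambda>x. coset x (GB i)) ` G i))"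
    by (simp add: bij_betw_def)
  moreover have "M {s + t |s t. s \<in> X \<and> t \<in> Y} = (\<lambda>i\<in>I. {s + t |s t. s \<in> M X i \<and> t \<in> M Y i})"
    if "X \<in> (\<lambda>z. coset z B) ` Z" "Y \<in> (\<lambda>z. coset z B) ` Z" for X Y
  proof -
    from that obtain z z' where z: "z \<in> Z" "z' \<in> Z" "X = coset z B" "Y = coset z' B" by auto
    have "M {s + t |s t. s \<in> X \<and> t \<in> Y} = M (coset (z + z') B)"
      using z coset_plus_coset[OF B] by simp
    also have "\<dots> = (\<lambda>i\<in>I. coset (\<Phi> z i + \<Phi> z' i) (GB i))"
      using M_coset[OF subspace_add[OF Z z(1,2)]] add[OF z(1,2)] by (simp cong: restrict_cong)
    also have "\<dots> = (\<lambda>i\<in>I. {s + t |s t. s \<in> M X i \<and> t \<in> M Y i})"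
      using z by (intro restrict_ext) (simp add: M_coset coset_plus_coset[OF GB(1)])
    finally show ?thesis .
  qed
  moreover have "M {scale c s + y |s y. s \<in> X \<and> y \<in> B} = (\<lambda>i\<in>I. {scale c s + y |s y. s \<in> M X i \<and> y \<in> GB i})"
    if "X \<in> (\<lambda>z. coset z B) ` Z" for c X
  proof -
    from that obtain z where z: "z \<in> Z" "X = coset z B" by auto
    have "M {scale c s + y |s y. s \<in> X \<and> y \<in> B} = M (coset (scale c z) B)"
      using z scale_coset_plus[OF B] by simp
    also have "\<dots> = (\<lambda>i\<in>I. coset (scale c (\<Phi> z i)) (GB i))"
      using M_coset[OF subspace_scale[OF Z z(1)]] scale[OF z(1)] by (simp cong: restrict_cong)
    also have "\<dots> = (\<lambda>i\<in>I. {scale c s + y |s y. s \<in> M X i \<and> y \<in> GB i})"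
      using z by (intro restrict_ext) (simp add: M_coset scale_coset_plus[OF GB(1)])
    finally show ?thesis .
  qed
  ultimately show ?thesis
    unfolding iso_vs_def vs_quot_def vs_dsum_eq prod.case fst_conv snd_conv by blast
qed

end

locale graded_filtration = vector_space scale
  for scale :: "'a::field \<Rightarrow> 'b::ab_group_add \<Rightarrow> 'b" +
  fixes k :: nat and F :: "nat \<Rightarrow> 'b set" and \<phi> :: "nat \<Rightarrow> 'b \<Rightarrow> 'b"
  assumes subspace_F: "subspace (F p)"
    and linear_\<phi>: "Vector_Spaces.linear scale scale (\<phi> p)"
    and F_Suc_subset: "F (Suc p) \<subseteq> F p"
    and F_Suc_k: "F (Suc k) = {0}"
    and \<phi>_eq_0_iff: "z \<in> F p \<Longrightarrow> \<phi> p z = 0 \<longleftrightarrow> z \<in> F (Suc p)"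
begin

sublocale P: vector_space_pair scale scale ..

lemma F_antimono: "p \<le> q \<Longrightarrow> F q \<subseteq> F p"
  by (rule lift_Suc_antimono_le[of F, OF F_Suc_subset])

lemma \<phi>_eq_0: "z \<in> F q \<Longrightarrow> p < q \<Longrightarrow> \<phi> p z = 0"
  using \<phi>_eq_0_iff F_antimono[of "Suc p" q] F_antimono[of p q] by auto

lemma subspace_image_\<phi>: "subspace X \<Longrightarrow> subspace (\<phi> p ` X)"
  by (rule P.linear_subspace_image[OF linear_\<phi>])

lemma graded_filtration_inter:
  assumes "subspace B"
  shows "graded_filtration scale k (\<lambda>p. F p \<inter> B) \<phi>"
proof (intro graded_filtration.intro graded_filtration_axioms.intro vector_space_axioms)
  show "subspace (F p \<inter> B)" for p using subspace_F assms by (rule subspace_inter)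
  show "F (Suc k) \<inter> B = {0}" using F_Suc_k subspace_0[OF assms] by auto
qed (use linear_\<phi> F_Suc_subset \<phi>_eq_0_iff in auto)

end

locale graded_filtration_splitting = graded_filtration +
  fixes \<sigma> :: "nat \<Rightarrow> 'b \<Rightarrow> 'b"
  assumes linear_\<sigma>: "Vector_Spaces.linear scale scale (\<sigma> p)"
    and \<sigma>_in_F: "w \<in> \<phi> p ` F p \<Longrightarrow> \<sigma> p w \<in> F p"
    and \<phi>_\<sigma>: "w \<in> \<phi> p ` F p \<Longrightarrow> \<phi> p (\<sigma> p w) = w"
begin

lemma \<phi>_sum_\<sigma>:
  assumes "p \<le> k" and w: "\<forall>q\<in>{p..k}. w q \<in> \<phi> q ` F q"
  shows "\<phi> p (\<Sum>q=p..k. \<sigma> q (w q)) = w p"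
proof -
  have "\<phi> p (\<sigma> q (w q)) = 0" if "q \<in> {Suc p..k}" for q
    using \<phi>_eq_0[OF \<sigma>_in_F] w that by auto
  then have "(\<Sum>q=Suc p..k. \<phi> p (\<sigma> q (w q))) = 0" by simp
  moreover have "\<phi> p (\<sigma> p (w p)) = w p" using \<phi>_\<sigma> w \<open>p \<le> k\<close> by simp
  ultimately show ?thesis
    by (simp add: sum.atLeast_Suc_atMost[OF \<open>p \<le> k\<close>] P.linear_add[OF linear_\<phi>] P.linear_sum[OF linear_\<phi>])
qed

lemma sum_\<sigma>_eq_0D:
  assumes "p \<le> Suc k" and "\<forall>q\<in>{p..k}. w q \<in> \<phi> q ` F q" and "(\<Sum>q=p..k. \<sigma> q (w q)) = 0"
  shows "\<forall>q\<in>{p..k}. w q = 0"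
  using assms
proof (induction p rule: inc_induct)
  case (step n)
  have n: "n \<le> k" using step.hyps by simp
  have "w n = \<phi> n (\<Sum>q=n..k. \<sigma> q (w q))" using \<phi>_sum_\<sigma>[OF n step.prems(1)] by simp
  also have "\<dots> = 0" using step.prems(2) P.linear_0[OF linear_\<phi>] by simp
  finally have wn: "w n = 0" .
  have "(\<Sum>q=n..k. \<sigma> q (w q)) = \<sigma> n (w n) + (\<Sum>q=Suc n..k. \<sigma> q (w q))"
    by (rule sum.atLeast_Suc_atMost[OF n])
  then have "(\<Sum>q=Suc n..k. \<sigma> q (w q)) = 0"
    using step.prems(2) wn P.linear_0[OF linear_\<sigma>] by simp
  moreover have "\<forall>q\<in>{Suc n..k}. w q \<in> \<phi> q ` F q" using step.prems(1) by simp
  ultimately have "\<forall>q\<in>{Suc n..k}. w q = 0" using step.IH by blast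
  then show ?case using wn by (auto simp: le_less Suc_le_eq)
qed simp

lemma sum_\<sigma>_surj:
  assumes "p \<le> Suc k" and "z \<in> F p"
  shows "\<exists>w. (\<forall>q\<in>{p..k}. w q \<in> \<phi> q ` F q) \<and> z = (\<Sum>q=p..k. \<sigma> q (w q))"
  using assms
proof (induction p arbitrary: z rule: inc_induct)
  case base
  then show ?case using F_Suc_k by simp
next
  case (step n)
  define a where "a = \<phi> n z"
  have a: "a \<in> \<phi> n ` F n" using step.prems a_def by simp
  have "\<phi> n (z - \<sigma> n a) = 0"
    using \<phi>_\<sigma>[OF a] by (simp add: P.linear_diff[OF linear_\<phi>] a_def)
  then have "z - \<sigma> n a \<in> F (Suc n)"
    using \<phi>_eq_0_iff subspace_diff[OF subspace_F step.prems \<sigma>_in_F[OF a]] by blast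
  then obtain w where w: "\<forall>q\<in>{Suc n..k}. w q \<in> \<phi> q ` F q" "z - \<sigma> n a = (\<Sum>q=Suc n..k. \<sigma> q (w q))"
    using step.IH by blast
  have "n \<le> k" using step.hyps by simp
  have "\<forall>q\<in>{n..k}. (w(n := a)) q \<in> \<phi> q ` F q" using w(1) a by (auto simp: le_less Suc_le_eq)
  moreover have "z = (\<Sum>q=n..k. \<sigma> q ((w(n := a)) q))"
    using w(2) by (simp add: sum.atLeast_Suc_atMost[OF \<open>n \<le> k\<close>] algebra_simps)
  ultimately show ?case by blast
qed

definition assemble :: "(nat \<Rightarrow> 'b) \<Rightarrow> 'b" where
  "assemble w = (\<Sum>p\<le>k. \<sigma> p (w p))"

lemma assemble_add: "assemble (\<lambda>p\<in>{..k}. w p + w' p) = assemble w + assemble w'"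
  by (simp add: assemble_def sum.distrib P.linear_add[OF linear_\<sigma>])

lemma assemble_scale: "assemble (\<lambda>p\<in>{..k}. scale c (w p)) = scale c (assemble w)"
  by (simp add: assemble_def scale_sum_right P.linear_scale[OF linear_\<sigma>])

lemma bij_assemble: "bij_betw assemble (Pi\<^sub>E {..k} (\<lambda>p. \<phi> p ` F p)) (F 0)"
proof (rule bij_betwI')
  fix w w' assume w: "w \<in> Pi\<^sub>E {..k} (\<lambda>p. \<phi> p ` F p)" and w': "w' \<in> Pi\<^sub>E {..k} (\<lambda>p. \<phi> p ` F p)"
  have "assemble w - assemble w' = (\<Sum>q=0..k. \<sigma> q (w q - w' q))"
    by (simp add: assemble_def atLeast0AtMost sum_subtractf P.linear_diff[OF linear_\<sigma>])
  moreover have "\<forall>q\<in>{0..k}. w q - w' q \<in> \<phi> q ` F q"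
    using w w' subspace_diff[OF subspace_image_\<phi>[OF subspace_F]] by (auto simp: PiE_iff)
  ultimately have "assemble w = assemble w' \<Longrightarrow> \<forall>q\<in>{0..k}. w q - w' q = 0"
    by (intro sum_\<sigma>_eq_0D) simp_all
  then show "assemble w = assemble w' \<longleftrightarrow> w = w'"
    using PiE_ext[OF w w'] by auto
next
  fix w assume "w \<in> Pi\<^sub>E {..k} (\<lambda>p. \<phi> p ` F p)"
  then have "\<sigma> p (w p) \<in> F 0" if "p \<le> k" for p
    using \<sigma>_in_F F_antimono[of 0 p] that by (auto simp: PiE_iff)
  then show "assemble w \<in> F 0" unfolding assemble_def by (auto intro: subspace_sum[OF subspace_F])
next
  fix z assume "z \<in> F 0"
  then obtain w where w: "\<forall>q\<in>{0..k}. w q \<in> \<phi> q ` F q" "z = (\<Sum>q=0..k. \<sigma> q (w q))"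
    using sum_\<sigma>_surj[of 0] by blast
  then have "restrict w {..k} \<in> Pi\<^sub>E {..k} (\<lambda>p. \<phi> p ` F p)" "z = assemble (restrict w {..k})"
    by (auto simp: assemble_def atLeast0AtMost)
  then show "\<exists>w\<in>Pi\<^sub>E {..k} (\<lambda>p. \<phi> p ` F p). z = assemble w" by blast
qed

lemma assemble_in_iff:
  assumes B: "subspace B" and \<sigma>_B: "\<And>p w. w \<in> \<phi> p ` (F p \<inter> B) \<Longrightarrow> \<sigma> p w \<in> B"
    and w: "w \<in> Pi\<^sub>E {..k} (\<lambda>p. \<phi> p ` F p)"
  shows "assemble w \<in> B \<longleftrightarrow> (\<forall>p\<le>k. w p \<in> \<phi> p ` (F p \<inter> B))"
proof
  assume "\<forall>p\<le>k. w p \<in> \<phi> p ` (F p \<inter> B)"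
  then show "assemble w \<in> B" unfolding assemble_def using \<sigma>_B by (auto intro: subspace_sum[OF B])
next
  assume "assemble w \<in> B"
  interpret FB: graded_filtration_splitting scale k "\<lambda>p. F p \<inter> B" \<phi> \<sigma>
    by (intro graded_filtration_splitting.intro graded_filtration_inter[OF B] graded_filtration_splitting_axioms.intro)
       (use linear_\<sigma> \<sigma>_in_F \<sigma>_B \<phi>_\<sigma> in auto)
  have "assemble w \<in> F 0 \<inter> B" using bij_assemble w \<open>assemble w \<in> B\<close> by (auto simp: bij_betw_def)
  then obtain w' where w': "\<forall>q\<in>{0..k}. w' q \<in> \<phi> q ` (F q \<inter> B)" "assemble w = (\<Sum>q=0..k. \<sigma> q (w' q))"
    using FB.sum_\<sigma>_surj[of 0 "assemble w"] by auto
  then have "assemble w = assemble (restrict w' {..k})" by (simp add: assemble_def atLeast0AtMost)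
  moreover have "restrict w' {..k} \<in> Pi\<^sub>E {..k} (\<lambda>p. \<phi> p ` F p)" using w'(1) by auto
  ultimately have "w = restrict w' {..k}" using bij_assemble w by (auto simp: bij_betw_def inj_on_def)
  then show "\<forall>p\<le>k. w p \<in> \<phi> p ` (F p \<inter> B)" using w'(1) by auto
qed

end

context graded_filtration
begin

lemma splitting_exists:
  assumes B: "subspace B"
  obtains \<sigma> where "graded_filtration_splitting scale k F \<phi> \<sigma>"
    and "\<And>p w. w \<in> \<phi> p ` (F p \<inter> B) \<Longrightarrow> \<sigma> p w \<in> B"
proof -
  have "\<exists>g. Vector_Spaces.linear scale scale g \<and> (\<forall>w\<in>\<phi> p ` F p. g w \<in> F p \<and> \<phi> p (g w) = w)
          \<and> (\<forall>w\<in>\<phi> p ` (F p \<inter> B). g w \<in> F p \<inter> B)" for p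
    using linear_section_compatible[OF linear_\<phi> subspace_F subspace_inter[OF subspace_F B]]
    by (metis Int_lower1)
  then obtain \<sigma> where \<sigma>: "\<And>p. Vector_Spaces.linear scale scale (\<sigma> p)"
    "\<And>p w. w \<in> \<phi> p ` F p \<Longrightarrow> \<sigma> p w \<in> F p \<and> \<phi> p (\<sigma> p w) = w"
    "\<And>p w. w \<in> \<phi> p ` (F p \<inter> B) \<Longrightarrow> \<sigma> p w \<in> F p \<inter> B"
    by metis
  have "graded_filtration_splitting scale k F \<phi> \<sigma>"
    by (intro graded_filtration_splitting.intro graded_filtration_axioms graded_filtration_splitting_axioms.intro)
       (use \<sigma> in auto)
  then show thesis by (rule that) (use \<sigma>(3) in blast)
qed

theorem iso_vs_graded: "iso_vs (vs_sub scale (F 0)) (vs_dsum {..k} (\<lambda>p. vs_sub scale (\<phi> p ` F p)))"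
proof -
  obtain \<sigma> where "graded_filtration_splitting scale k F \<phi> \<sigma>"
    using splitting_exists[OF subspace_UNIV] by metis
  then interpret graded_filtration_splitting scale k F \<phi> \<sigma> .
  show ?thesis
    using bij_betw_inv_into[OF bij_assemble]
      inv_into_PiE_linear[OF subspace_image_\<phi>[OF subspace_F] bij_assemble assemble_add assemble_scale]
    by (rule iso_vs_sub_PiE)
qed

theorem iso_vs_quot_graded:
  assumes B: "subspace B"
  shows "iso_vs (vs_quot scale (F 0) (F 0 \<inter> B))
           (vs_dsum {..k} (\<lambda>p. vs_quot scale (\<phi> p ` F p) (\<phi> p ` (F p \<inter> B))))"
proof -
  obtain \<sigma> where "graded_filtration_splitting scale k F \<phi> \<sigma>"
    and \<sigma>_B: "\<And>p w. w \<in> \<phi> p ` (F p \<inter> B) \<Longrightarrow> \<sigma> p w \<in> B"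
    using splitting_exists[OF B] by metis
  then interpret graded_filtration_splitting scale k F \<phi> \<sigma> by simp
  let ?\<Phi> = "inv_into (Pi\<^sub>E {..k} (\<lambda>p. \<phi> p ` F p)) assemble"
  have in_B: "z \<in> F 0 \<inter> B \<longleftrightarrow> (\<forall>p\<in>{..k}. ?\<Phi> z p \<in> \<phi> p ` (F p \<inter> B))" if "z \<in> F 0" for z
    using assemble_in_iff[OF B \<sigma>_B, of "?\<Phi> z"] bij_betw_inv_into_right[OF bij_assemble that]
      bij_betw_apply[OF bij_betw_inv_into[OF bij_assemble] that] that
    by auto
  show ?thesis
    by (rule iso_vs_quot_PiE[OF subspace_F subspace_inter[OF subspace_F B] _ subspace_image_\<phi>[OF subspace_F]
          subspace_image_\<phi>[OF subspace_inter[OF subspace_F B]] _ bij_betw_inv_into[OF bij_assemble] _ _ in_B])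
      (use inv_into_PiE_linear[OF subspace_image_\<phi>[OF subspace_F] bij_assemble assemble_add assemble_scale] in auto)
qed

end

lemma sum_fun_apply: "(\<Sum>i\<in>A. f i) a = (\<Sum>i\<in>A. f i a)"
  by (induction A rule: infinite_finite_induct) auto

lemma single_0[simp]: "single a b 0 = 0"
  by (simp add: single_def fun_eq_iff)

definition supported_in :: "(nat \<Rightarrow> nat \<Rightarrow> bool) \<Rightarrow> (nat \<Rightarrow> nat \<Rightarrow> 'v::zero) set" where
  "supported_in P = {x. \<forall>p q. x p q \<noteq> 0 \<longrightarrow> P p q}"

definition column_filtration :: "nat \<Rightarrow> (nat \<Rightarrow> nat \<Rightarrow> 'v::zero) set" where
  "column_filtration p = supported_in (\<lambda>p' q. p \<le> p')"

lemma column_filtration_0[simp]: "column_filtration 0 = UNIV"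
  by (auto simp: column_filtration_def supported_in_def)

lemma column_filtration_Suc_subset: "column_filtration (Suc p) \<subseteq> column_filtration p"
  by (auto simp: column_filtration_def supported_in_def)

lemma Ck_eq: "Ck Cs k = tot Cs \<inter> supported_in (\<lambda>p q. p + q = k)"
  by (auto simp: Ck_def supported_in_def)

lemma Ck_subset_tot: "Ck Cs k \<subseteq> tot Cs"
  by (auto simp: Ck_def)

lemma Cpq_subset_Ck: "a + b = k \<Longrightarrow> Cpq Cs a b \<subseteq> Ck Cs k"
  by (auto simp: Cpq_def Ck_def)

lemma Zk_subset_Ck: "Zk Cs d k \<subseteq> Ck Cs k"
  by (auto simp: Zk_def)

lemma Ck_inter_column_filtration_Suc: "Ck Cs k \<inter> column_filtration (Suc k) \<subseteq> {0}"
proof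
  fix x assume "x \<in> Ck Cs k \<inter> column_filtration (Suc k)"
  then have "x a b \<noteq> 0 \<Longrightarrow> a + b = k \<and> Suc k \<le> a" for a b
    by (auto simp: Ck_def column_filtration_def supported_in_def)
  then show "x \<in> {0}" by (fastforce simp: fun_eq_iff)
qed

lemma piq_eq_0_iff:
  assumes "z \<in> Ck Cs k" "z \<in> column_filtration p"
  shows "piq (k - p) z = 0 \<longleftrightarrow> z \<in> column_filtration (Suc p)"
proof -
  have "k - p \<le> b \<longleftrightarrow> \<not> Suc p \<le> a" if "z a b \<noteq> 0" for a b
  proof -
    have "a + b = k" "p \<le> a" using assms that by (auto simp: Ck_def column_filtration_def supported_in_def)
    then show ?thesis by arith
  qed
  then have "(\<forall>a b. z a b \<noteq> 0 \<longrightarrow> \<not> k - p \<le> b) \<longleftrightarrow> (\<forall>a b. z a b \<noteq> 0 \<longrightarrow> Suc p \<le> a)"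
    by blast
  then show ?thesis
    by (auto simp: piq_def column_filtration_def supported_in_def fun_eq_iff)
qed

lemma column_filtration_if_piq_in_Cpq:
  assumes "v \<in> Ck Cs k" "piq (k - p) v \<in> Cpq Cs p (k - p)"
  shows "v \<in> column_filtration p"
proof -
  have "p \<le> a" if "v a b \<noteq> 0" for a b
  proof (rule ccontr)
    assume "\<not> p \<le> a"
    moreover have "a + b = k" using assms(1) that by (auto simp: Ck_def)
    ultimately have "piq (k - p) v a b = v a b" "(a, b) \<noteq> (p, k - p)" by (auto simp: piq_def)
    then show False using assms(2) that by (auto simp: Cpq_def)
  qed
  then show ?thesis by (auto simp: column_filtration_def supported_in_def)
qed

lemma piq_Cpq_eq_0: "x \<in> Cpq Cs a b \<Longrightarrow> b < q \<Longrightarrow> piq q x = 0"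
  by (auto simp: Cpq_def piq_def fun_eq_iff)

lemma Ck_eq_sum_single:
  assumes "y \<in> Ck Cs m" "piq q y = 0"
  shows "y = (\<Sum>j<q. single (m - j) j (y (m - j) j))"
proof (intro ext)
  fix a b
  have "y a b = (if b < q \<and> a = m - b then y a b else 0)"
  proof (cases "y a b = 0")
    case False
    moreover have "piq q y a b = 0" using assms(2) by simp
    ultimately have "\<not> q \<le> b" by (auto simp: piq_def split: if_splits)
    moreover have "a + b = m" using assms(1) False by (auto simp: Ck_def)
    ultimately show ?thesis by auto
  qed auto
  also have "\<dots> = (\<Sum>j<q. if j = b then (if a = m - b then y a b else 0) else 0)"
    by (simp add: sum.delta)
  also have "\<dots> = (\<Sum>j<q. single (m - j) j (y (m - j) j)) a b"
    unfolding sum_fun_apply single_def by (intro sum.cong) auto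
  finally show "y a b = (\<Sum>j<q. single (m - j) j (y (m - j) j)) a b" .
qed

locale bigraded_cochain_complex =
  fixes sc :: "'r::field \<Rightarrow> 'v::ab_group_add \<Rightarrow> 'v"
    and Cs :: "nat \<Rightarrow> nat \<Rightarrow> 'v set"
    and d :: "(nat \<Rightarrow> nat \<Rightarrow> 'v) \<Rightarrow> nat \<Rightarrow> nat \<Rightarrow> 'v"
  assumes bigraded_complex: "bigraded_complex sc Cs d"
begin

sublocale S: vector_space sc
  using bigraded_complex by (simp add: bigraded_complex_def)

lemma zero_Cs: "0 \<in> Cs p q"
  and add_Cs: "x \<in> Cs p q \<Longrightarrow> y \<in> Cs p q \<Longrightarrow> x + y \<in> Cs p q"
  and scale_Cs: "x \<in> Cs p q \<Longrightarrow> sc c x \<in> Cs p q"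
  using bigraded_complex by (auto simp: bigraded_complex_def)

lemma d_add: "x \<in> tot Cs \<Longrightarrow> y \<in> tot Cs \<Longrightarrow> d (x + y) = d x + d y"
  and d_scale: "x \<in> tot Cs \<Longrightarrow> d (scaleC sc c x) = scaleC sc c (d x)"
  and d_Ck: "x \<in> Ck Cs k \<Longrightarrow> d x \<in> Ck Cs (Suc k)"
  and d_d: "x \<in> tot Cs \<Longrightarrow> d (d x) = 0"
  using bigraded_complex unfolding bigraded_complex_def by blast+

sublocale V: vector_space "scaleC sc"
  by unfold_locales (simp_all add: scaleC_def fun_eq_iff S.scale_right_distrib S.scale_left_distrib)

sublocale VP: vector_space_pair "scaleC sc" "scaleC sc" ..

lemma subspace_tot: "V.subspace (tot Cs)"
proof -
  have "finite {(p, q). (x + y) p q \<noteq> 0}"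
    if "finite {(p, q). x p q \<noteq> 0}" "finite {(p, q). y p q \<noteq> 0}" for x y :: "nat \<Rightarrow> nat \<Rightarrow> 'v"
    by (rule finite_subset[OF _ finite_UnI[OF that]]) auto
  moreover have "finite {(p, q). scaleC sc c x p q \<noteq> 0}" if "finite {(p, q). x p q \<noteq> 0}" for c x
    by (rule finite_subset[OF _ that]) (auto simp: scaleC_def)
  ultimately show ?thesis
    unfolding V.subspace_def tot_def using zero_Cs add_Cs scale_Cs by (auto simp: scaleC_def)
qed

lemma subspace_supported_in: "V.subspace (supported_in P)"
  unfolding V.subspace_def supported_in_def scaleC_def
  by (auto simp: fun_eq_iff) (metis add.right_neutral)+

lemma subspace_Ck: "V.subspace (Ck Cs k)"
  unfolding Ck_eq by (intro V.subspace_inter subspace_tot subspace_supported_in)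

lemma subspace_column_filtration: "V.subspace (column_filtration p)"
  unfolding column_filtration_def by (rule subspace_supported_in)

lemma piq_in_Cpq:
  assumes "v \<in> Ck Cs k" "v \<in> column_filtration p"
  shows "piq (k - p) v \<in> Cpq Cs p (k - p)"
proof -
  have "piq (k - p) v a b = 0" if "(a, b) \<noteq> (p, k - p)" for a b
  proof (cases "v a b = 0")
    case False
    then have "a + b = k" "p \<le> a" using assms by (auto simp: Ck_def column_filtration_def supported_in_def)
    then show ?thesis using that by (auto simp: piq_def)
  qed (simp add: piq_def)
  moreover have "piq (k - p) v \<in> tot Cs"
    using assms(1) zero_Cs by (auto simp: Ck_def tot_def piq_def intro: finite_subset[of _ "{(p, q). v p q \<noteq> 0}"])
  ultimately show ?thesis by (auto simp: Cpq_def)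
qed

lemma zero_Cpq: "0 \<in> Cpq Cs a b"
  using V.subspace_0[OF subspace_tot] by (auto simp: Cpq_def)

lemma d_zero: "d 0 = 0"
  using d_add[OF V.subspace_0[OF subspace_tot] V.subspace_0[OF subspace_tot]] by simp

lemma d_diff: "x \<in> tot Cs \<Longrightarrow> y \<in> tot Cs \<Longrightarrow> d (x - y) = d x - d y"
  using d_add[OF V.subspace_diff[OF subspace_tot], of x y y] by simp

lemma d_sum: "(\<And>i. i \<in> A \<Longrightarrow> f i \<in> tot Cs) \<Longrightarrow> d (\<Sum>i\<in>A. f i) = (\<Sum>i\<in>A. d (f i))"
proof (induction A rule: infinite_finite_induct)
  case (insert a A)
  have "(\<Sum>i\<in>A. f i) \<in> tot Cs" using insert.prems by (auto intro: V.subspace_sum[OF subspace_tot])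
  then have "d (\<Sum>i\<in>insert a A. f i) = d (f a) + d (\<Sum>i\<in>A. f i)"
    using insert.prems d_add[of "f a"] by (simp only: sum.insert[OF insert.hyps]) simp
  then show ?case using insert by (simp only: sum.insert[OF insert.hyps]) simp
qed (simp_all add: d_zero)

lemma subspace_image_d:
  assumes X: "V.subspace X" "X \<subseteq> tot Cs"
  shows "V.subspace (d ` X)"
  unfolding V.subspace_def
proof (intro conjI ballI allI)
  show "0 \<in> d ` X" using d_zero V.subspace_0[OF X(1)] by (metis image_eqI)
  fix x y assume "x \<in> d ` X" "y \<in> d ` X"
  then obtain a b where "a \<in> X" "b \<in> X" "x = d a" "y = d b" by blast
  moreover have "a + b \<in> X" using V.subspace_add[OF X(1)] \<open>a \<in> X\<close> \<open>b \<in> X\<close> .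
  moreover have "d (a + b) = d a + d b" using d_add \<open>a \<in> X\<close> \<open>b \<in> X\<close> X(2) by blast
  ultimately show "x + y \<in> d ` X" by (simp add: rev_image_eqI)
next
  fix c x assume "x \<in> d ` X"
  then obtain a where "a \<in> X" "x = d a" by blast
  moreover have "scaleC sc c a \<in> X" using V.subspace_scale[OF X(1)] \<open>a \<in> X\<close> .
  moreover have "d (scaleC sc c a) = scaleC sc c (d a)" using d_scale \<open>a \<in> X\<close> X(2) by blast
  ultimately show "scaleC sc c x \<in> d ` X" by (simp add: rev_image_eqI)
qed

lemma subspace_Bk: "V.subspace (Bk Cs d k)"
proof -
  have "Bk Cs d k = d ` (tot Cs \<inter> supported_in (\<lambda>p q. Suc (p + q) = k))"
    by (auto simp: Bk_def supported_in_def)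
  then show ?thesis by (auto intro: subspace_image_d V.subspace_inter subspace_tot subspace_supported_in)
qed

lemma Bk_subset_Ck: "Bk Cs d k \<subseteq> Ck Cs k"
proof
  fix y assume "y \<in> Bk Cs d k"
  then obtain x where x: "x \<in> tot Cs" "\<forall>p q. x p q \<noteq> 0 \<longrightarrow> Suc (p + q) = k" "y = d x"
    by (auto simp: Bk_def)
  show "y \<in> Ck Cs k"
  proof (cases k)
    case 0
    then have "x = 0" using x by (auto simp: fun_eq_iff)
    then show ?thesis using x d_zero V.subspace_0[OF subspace_Ck] by simp
  next
    case (Suc m)
    then have "x \<in> Ck Cs m" using x by (auto simp: Ck_def)
    then show ?thesis using d_Ck x Suc by simp
  qed
qed

lemma subspace_Zk: "V.subspace (Zk Cs d k)"
  unfolding V.subspace_def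
proof (intro conjI ballI allI)
  show "0 \<in> Zk Cs d k" using V.subspace_0[OF subspace_Ck] d_zero by (simp add: Zk_def)
  fix x y assume "x \<in> Zk Cs d k" "y \<in> Zk Cs d k"
  then show "x + y \<in> Zk Cs d k"
    using d_add[of x y] V.subspace_add[OF subspace_Ck] Ck_subset_tot[of Cs k] by (auto simp: Zk_def)
next
  fix c x assume "x \<in> Zk Cs d k"
  moreover have "scaleC sc c 0 = 0" by (simp add: scaleC_def fun_eq_iff)
  ultimately show "scaleC sc c x \<in> Zk Cs d k"
    using d_scale[of x c] V.subspace_scale[OF subspace_Ck] Ck_subset_tot[of Cs k] by (auto simp: Zk_def)
qed

lemma Bk_subset_Zk: "Bk Cs d k \<subseteq> Zk Cs d k"
  using Bk_subset_Ck by (auto simp: Zk_def Bk_def d_d)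

lemma linear_piq: "Vector_Spaces.linear (scaleC sc) (scaleC sc) (piq q)"
  unfolding Vector_Spaces.linear_iff using V.vector_space_axioms
  by (auto simp: piq_def scaleC_def fun_eq_iff)

lemma graded_filtration_Zk:
  "graded_filtration (scaleC sc) k (\<lambda>p. Zk Cs d k \<inter> column_filtration p) (\<lambda>p. piq (k - p))"
proof (intro graded_filtration.intro graded_filtration_axioms.intro V.vector_space_axioms)
  show "V.subspace (Zk Cs d k \<inter> column_filtration p)" for p
    by (intro V.subspace_inter subspace_Zk subspace_column_filtration)
  show "Zk Cs d k \<inter> column_filtration (Suc k) = {0}"
    using Zk_subset_Ck Ck_inter_column_filtration_Suc V.subspace_0[OF subspace_Zk]
      V.subspace_0[OF subspace_column_filtration] by blast
  show "piq (k - p) z = 0 \<longleftrightarrow> z \<in> Zk Cs d k \<inter> column_filtration (Suc p)"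
    if "z \<in> Zk Cs d k \<inter> column_filtration p" for p z
    using that piq_eq_0_iff Zk_subset_Ck by blast
qed (use linear_piq column_filtration_Suc_subset in auto)

lemma Bkq_inter_Cpq:
  "p \<le> k \<Longrightarrow> Bkq Cs d k (k - p) \<inter> Cpq Cs p (k - p) = piq (k - p) ` (Bk Cs d k \<inter> column_filtration p)"
  using Bk_subset_Ck piq_in_Cpq column_filtration_if_piq_in_Cpq by (fastforce simp: Bkq_def)

lemma zero_BN: "0 \<in> BN Cs d j (Suc k)"
proof -
  have "dij d i l 0 = 0" for i l
    by (simp add: dij_def d_zero fun_eq_iff)
  then have "0 \<in> Nq_deg Cs d j k"
    using zero_Cpq by (simp add: Nq_deg_def Npq_def)
  then show ?thesis using d_zero by (force simp: BN_def)
qed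

lemma Mk_cocycle_correction:
  assumes \<eta>: "\<eta> \<in> Mk Cs d k" and d\<eta>: "piq q (d \<eta>) = 0" and "q \<le> k"
  obtains z where "z \<in> Zk Cs d k" and "piq q z = piq q \<eta>"
proof -
  \<comment> \<open>Only the membership of these preimages in C^(k-j,j) is needed, not the kernel conditions defining N.\<close>
  have "\<exists>m. m \<in> Cpq Cs (k - j) j \<and> d m = single (Suc k - j) j (d \<eta> (Suc k - j) j)" if "j < q" for j
  proof -
    have "single (Suc k - j) j (d \<eta> (Suc k - j) j) \<in> BN Cs d j (Suc k)"
      using \<eta> that \<open>q \<le> k\<close> by (auto simp: Mk_def)
    then show ?thesis using that \<open>q \<le> k\<close> by (auto simp: BN_def Nq_deg_def Npq_def)
  qed
  then obtain n where n: "\<And>j. j < q \<Longrightarrow> n j \<in> Cpq Cs (k - j) j"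
    "\<And>j. j < q \<Longrightarrow> d (n j) = single (Suc k - j) j (d \<eta> (Suc k - j) j)"
    by metis
  have n_Ck: "n j \<in> Ck Cs k" if "j < q" for j
    using n(1)[OF that] Cpq_subset_Ck[of "k - j" j k] that \<open>q \<le> k\<close> by auto
  have \<eta>_Ck: "\<eta> \<in> Ck Cs k" using \<eta> by (simp add: Mk_def)
  define z where "z = \<eta> - (\<Sum>j<q. n j)"
  have sum_n: "(\<Sum>j<q. n j) \<in> Ck Cs k" by (auto intro: V.subspace_sum[OF subspace_Ck] n_Ck)
  have "\<eta> \<in> tot Cs" "(\<Sum>j<q. n j) \<in> tot Cs" "\<And>j. j < q \<Longrightarrow> n j \<in> tot Cs"
    using \<eta>_Ck sum_n n_Ck Ck_subset_tot by blast+
  moreover have "d (\<Sum>j<q. n j) = (\<Sum>j<q. d (n j))"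
    by (rule d_sum) (use n_Ck Ck_subset_tot in blast)
  ultimately have "d z = d \<eta> - (\<Sum>j<q. d (n j))" by (simp add: z_def d_diff)
  also have "(\<Sum>j<q. d (n j)) = d \<eta>"
    using Ck_eq_sum_single[OF d_Ck[OF \<eta>_Ck] d\<eta>] n(2) by simp
  finally have "d z = 0" by (simp only: diff_self)
  moreover have "z \<in> Ck Cs k" unfolding z_def by (rule V.subspace_diff[OF subspace_Ck \<eta>_Ck sum_n])
  ultimately have "z \<in> Zk Cs d k" by (simp add: Zk_def)
  moreover have "piq q (\<Sum>j<q. n j) = 0"
    unfolding VP.linear_sum[OF linear_piq] using piq_Cpq_eq_0 n(1) by (intro sum.neutral) blast
  then have "piq q z = piq q \<eta>" by (simp add: z_def VP.linear_diff[OF linear_piq])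
  ultimately show thesis by (rule that)
qed

lemma Zkq_inter_Cpq:
  assumes "p \<le> k"
  shows "Zkq Cs d k (k - p) \<inter> Cpq Cs p (k - p) = piq (k - p) ` (Zk Cs d k \<inter> column_filtration p)"
proof (intro equalityI subsetI)
  fix x assume "x \<in> Zkq Cs d k (k - p) \<inter> Cpq Cs p (k - p)"
  then obtain \<eta> where \<eta>: "\<eta> \<in> Mk Cs d k" "piq (k - p) (d \<eta>) = 0" "x = piq (k - p) \<eta>"
    and x: "x \<in> Cpq Cs p (k - p)"
    by (auto simp: Zkq_def)
  obtain z where z: "z \<in> Zk Cs d k" "piq (k - p) z = x"
    using Mk_cocycle_correction[OF \<eta>(1,2)] \<eta>(3) by auto
  then have "z \<in> column_filtration p"
    using column_filtration_if_piq_in_Cpq Zk_subset_Ck x by blast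
  then show "x \<in> piq (k - p) ` (Zk Cs d k \<inter> column_filtration p)" using z by blast
next
  fix x assume "x \<in> piq (k - p) ` (Zk Cs d k \<inter> column_filtration p)"
  then obtain z where z: "z \<in> Zk Cs d k" "z \<in> column_filtration p" "x = piq (k - p) z" by auto
  then have "z \<in> Mk Cs d k" "piq (k - p) (d z) = 0"
    using zero_BN by (auto simp: Mk_def Zk_def piq_def fun_eq_iff)
  then show "x \<in> Zkq Cs d k (k - p) \<inter> Cpq Cs p (k - p)"
    using z piq_in_Cpq[of z k p] Zk_subset_Ck[of Cs d k] by (auto simp: Zkq_def)
qed

end

theorem corollary3p4:
  fixes sc :: "'r::field \<Rightarrow> 'v::ab_group_add \<Rightarrow> 'v"
    and Cs :: "nat \<Rightarrow> nat \<Rightarrow> 'v set"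
    and d :: "(nat \<Rightarrow> nat \<Rightarrow> 'v) \<Rightarrow> nat \<Rightarrow> nat \<Rightarrow> 'v"
    and k :: nat
  assumes "bigraded_complex sc Cs d"
  shows "iso_vs (vs_sub (scaleC sc) (Bk Cs d k))
           (vs_dsum {..k} (\<lambda>p. vs_sub (scaleC sc) (Bkq Cs d k (k - p) \<inter> Cpq Cs p (k - p))))
       \<and> iso_vs (vs_sub (scaleC sc) (Zk Cs d k))
           (vs_dsum {..k} (\<lambda>p. vs_sub (scaleC sc) (Zkq Cs d k (k - p) \<inter> Cpq Cs p (k - p))))
       \<and> iso_vs (vs_quot (scaleC sc) (Zk Cs d k) (Bk Cs d k))
           (vs_dsum {..k} (\<lambda>p. vs_quot (scaleC sc) (Zkq Cs d k (k - p) \<inter> Cpq Cs p (k - p))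
                                              (Bkq Cs d k (k - p) \<inter> Cpq Cs p (k - p))))"
proof -
  interpret bigraded_cochain_complex sc Cs d by (rule bigraded_cochain_complex.intro[OF assms])
  interpret Z: graded_filtration "scaleC sc" k "\<lambda>p. Zk Cs d k \<inter> column_filtration p" "\<lambda>p. piq (k - p)"
    by (rule graded_filtration_Zk)
  have Bk_filtration: "Zk Cs d k \<inter> column_filtration p \<inter> Bk Cs d k = Bk Cs d k \<inter> column_filtration p" for p
    using Bk_subset_Zk by blast
  interpret B: graded_filtration "scaleC sc" k "\<lambda>p. Bk Cs d k \<inter> column_filtration p" "\<lambda>p. piq (k - p)"
    using Z.graded_filtration_inter[OF subspace_Bk[of k]] unfolding Bk_filtration .
  show ?thesis
    using B.iso_vs_graded Z.iso_vs_graded Z.iso_vs_quot_graded[OF subspace_Bk[of k]] Bk_subset_Zk[of k]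
    by (simp add: Zkq_inter_Cpq Bkq_inter_Cpq Bk_filtration Int_absorb1 cong: vs_dsum_cong)
qed

end
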